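(* Let $n\ge 2$, let $R$ be the full, complete rooted binary tree whose leaves are $1,\dots,n$ from left to right, and let $T$ be any full rooted binary tree whose leaves are $1,\dots,n$ from left to right. Let $p,s$ be two distinct nodes of $T$, and let $a,b$ be nodes of $R$ with $a\in X_{I_T(p)}$ and $b\in X_{I_T(s)}$. If $a\preceq_R b$, then $p\preceq_T s$ or $s\preceq_T p$. Moreover, if $a\prec_R b$, then $p\prec_T s$.
   Context: A rooted binary tree is full if every internal node has exactly two children, and complete if all levels are completely filled except possibly the last, where leaves are left-aligned; trees here are ordered (children are left/right), so leaves are read left to right. For a node $x$ of such a tree $T$, $I_T(x)$ denotes the set of leaves of the subtree rooted at $x$; it is an interval of $[n]$. For an interval $I\subseteq[n]$, $X_I$ denotes the (unique) minimum-cardinality set of nodes of $R$ such that the leaf sets $I_R(x)$, $x\in X_I$, partition $I$. In a rooted tree, $u\prec u'$ means $u$ is a strict ancestor of $u'$, and $u\preceq u'$ means $u=u'$ or $u\prec u'$. *)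

theory Defs
  imports Main "HOL-Library.Sublist"
begin

text \<open>Every tree of this datatype is full:
  each internal node has exactly two children. Nodes are addressed by their path from
  the root (False = left child, True = right child); the ancestor relation u \<preceq> u'
  is then the prefix relation on paths.\<close>

datatype btree = Leaf | Node btree btree

fun nleaves :: "btree \<Rightarrow> nat" where
  "nleaves Leaf = 1"
| "nleaves (Node l r) = nleaves l + nleaves r"

fun nodes :: "btree \<Rightarrow> bool list set" where
  "nodes Leaf = {[]}"
| "nodes (Node l r) = {[]} \<union> Cons False ` nodes l \<union> Cons True ` nodes r"

fun height :: "btree \<Rightarrow> nat" where
  "height Leaf = 0"
| "height (Node l r) = Suc (max (height l) (height r))"

text \<open>Leaf set of the subtree rooted at the node with path p, when the leaves of the
  whole tree are labelled k+1, k+2, ... from left to right. With k = 0 the leaves are 1..n.\<close>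
fun lvs :: "btree \<Rightarrow> nat \<Rightarrow> bool list \<Rightarrow> nat set" where
  "lvs t k [] = {k+1..k + nleaves t}"
| "lvs Leaf k (b # p) = {}"
| "lvs (Node l r) k (False # p) = lvs l k p"
| "lvs (Node l r) k (True # p) = lvs r (k + nleaves l) p"

definition leafset :: "btree \<Rightarrow> bool list \<Rightarrow> nat set" where
  "leafset t p = lvs t 0 p"

text \<open>Left-to-right position of a node within its level.\<close>
definition pos :: "bool list \<Rightarrow> nat" where
  "pos p = foldl (\<lambda>a b. 2 * a + (if b then 1 else 0)) 0 p"

text \<open>Complete: all levels above the last are completely filled, and on every level the
  nodes present are left-aligned.\<close>
definition complete :: "btree \<Rightarrow> bool" where
  "complete t \<longleftrightarrow>
     (\<forall>q. length q < height t \<longrightarrow> q \<in> nodes t) \<and>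
     (\<forall>p \<in> nodes t. \<forall>q. length q = length p \<and> pos q \<le> pos p \<longrightarrow> q \<in> nodes t)"

definition partitions :: "btree \<Rightarrow> nat set \<Rightarrow> bool list set \<Rightarrow> bool" where
  "partitions R I X \<longleftrightarrow> X \<subseteq> nodes R \<and>
     (\<forall>x\<in>X. \<forall>y\<in>X. x \<noteq> y \<longrightarrow> leafset R x \<inter> leafset R y = {}) \<and>
     (\<Union>x\<in>X. leafset R x) = I"

text \<open>X_I: the (unique) minimum-cardinality such set.\<close>
definition XI :: "btree \<Rightarrow> nat set \<Rightarrow> bool list set" where
  "XI R I = (THE X. partitions R I X \<and> (\<forall>Y. partitions R I Y \<longrightarrow> card X \<le> card Y))"

end

theory Submission
  imports Defs
begin

text \<open>X_I consists of the nodes of R whose leaf set lies in I while the leaf sets of their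
  proper ancestors do not. These nodes partition I, and any partition of I into leaf sets of R
  refines them, so they form the unique smallest one. Leaf sets of the nodes of a tree form a
  laminar family. Hence if a \<preceq> b, the leaves below b lie in both I_T(p) and I_T(s), so p and s
  are comparable; and if a \<prec> b but s \<prec> p, the leaves below a lie in I_T(p) \<subseteq> I_T(s),
  contradicting the maximality of b.\<close>

lemma nleaves_pos: "nleaves t > 0"
  by (induction t) auto

lemma finite_nodes: "finite (nodes t)"
  by (induction t) auto

lemma Nil_in_nodes: "[] \<in> nodes t"
  by (cases t) auto

lemma nodes_append_closed: "x @ z \<in> nodes t \<Longrightarrow> x \<in> nodes t"
proof (induction x arbitrary: t)
  case (Cons b x)
  then show ?case by (cases t) auto
qed (simp add: Nil_in_nodes)

lemma nodes_prefix_closed: "y \<in> nodes t \<Longrightarrow> prefix x y \<Longrightarrow> x \<in> nodes t"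
  by (auto simp: prefix_def intro: nodes_append_closed)

lemma lvs_subset_range: "x \<in> nodes t \<Longrightarrow> lvs t k x \<subseteq> {k+1..k + nleaves t}"
proof (induction t arbitrary: k x)
  case (Node l r)
  then show ?case by (cases x) fastforce+
qed auto

lemma lvs_nonempty: "x \<in> nodes t \<Longrightarrow> lvs t k x \<noteq> {}"
proof (induction t arbitrary: k x)
  case (Node l r)
  then show ?case using nleaves_pos[of l] by (cases x) fastforce+
qed auto

lemma lvs_append_subset: "x @ z \<in> nodes t \<Longrightarrow> lvs t k (x @ z) \<subseteq> lvs t k x"
proof (induction x arbitrary: t k)
  case Nil
  then show ?case using lvs_subset_range by simp
next
  case (Cons b x)
  then show ?case by (cases t; cases b) auto
qed

lemma lvs_antimono: "y \<in> nodes t \<Longrightarrow> prefix x y \<Longrightarrow> lvs t k y \<subseteq> lvs t k x"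
  by (auto simp: prefix_def dest: lvs_append_subset)

lemma lvs_append_psubset: "x @ c # z \<in> nodes t \<Longrightarrow> lvs t k (x @ c # z) \<subset> lvs t k x"
proof (induction x arbitrary: t k)
  case Nil
  then obtain l r where t: "t = Node l r" by (cases t) auto
  show ?case
  proof (cases c)
    case True
    with Nil t have "z \<in> nodes r" by auto
    then have "k + 1 \<notin> lvs t k (c # z)"
      using lvs_subset_range[of z r "k + nleaves l"] nleaves_pos[of l] t True by auto
    moreover have "k + 1 \<in> lvs t k []" using t nleaves_pos[of l] by simp
    ultimately show ?thesis using lvs_append_subset[OF Nil.prems] by auto
  next
    case False
    with Nil t have "z \<in> nodes l" by auto
    then have "k + nleaves t \<notin> lvs t k (c # z)"
      using lvs_subset_range[of z l k] nleaves_pos[of r] t False by auto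
    moreover have "k + nleaves t \<in> lvs t k []" using t nleaves_pos[of l] by simp
    ultimately show ?thesis using lvs_append_subset[OF Nil.prems] by auto
  qed
next
  case (Cons b x)
  then show ?case by (cases t; cases b) auto
qed

lemma lvs_strict_antimono:
  "y \<in> nodes t \<Longrightarrow> strict_prefix x y \<Longrightarrow> lvs t k y \<subset> lvs t k x"
  by (auto simp: strict_prefix_def prefix_def neq_Nil_conv dest!: lvs_append_psubset)

lemma lvs_siblings_disjoint:
  assumes "x \<in> nodes l" and "y \<in> nodes r"
  shows "lvs (Node l r) k (False # x) \<inter> lvs (Node l r) k (True # y) = {}"
  using lvs_subset_range[OF assms(1), of k] lvs_subset_range[OF assms(2), of "k + nleaves l"]
  by fastforce

lemma lvs_laminar:
  "x \<in> nodes t \<Longrightarrow> y \<in> nodes t \<Longrightarrow> lvs t k x \<inter> lvs t k y \<noteq> {} \<Longrightarrow> prefix x y \<or> prefix y x"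
proof (induction x arbitrary: t k y)
  case (Cons b x)
  show ?case
  proof (cases y)
    case (Cons c y')
    from Cons.prems obtain l r where t: "t = Node l r" by (cases t) auto
    show ?thesis
    proof (cases "b = c")
      case True
      then show ?thesis using Cons.IH[where y=y'] Cons.prems \<open>y = c # y'\<close> t by (cases b) auto
    next
      case False
      with Cons.prems \<open>y = c # y'\<close> t show ?thesis
        using lvs_siblings_disjoint[of x l y' r k] lvs_siblings_disjoint[of y' l x r k]
        by (cases b) auto
    qed
  qed simp
qed simp

lemma lvs_singleton: "i \<in> {k+1..k + nleaves t} \<Longrightarrow> \<exists>x\<in>nodes t. lvs t k x = {i}"
proof (induction t arbitrary: k)
  case (Node l r)
  show ?case
  proof (cases "i \<le> k + nleaves l")
    case True
    with Node.prems have "i \<in> {k+1..k + nleaves l}" by simp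
    with Node.IH(1) obtain x where "x \<in> nodes l" "lvs l k x = {i}" by blast
    then show ?thesis by (intro bexI[of _ "False # x"]) auto
  next
    case False
    with Node.prems have "i \<in> {k + nleaves l + 1..k + nleaves l + nleaves r}" by simp
    with Node.IH(2) obtain x where "x \<in> nodes r" "lvs r (k + nleaves l) x = {i}" by blast
    then show ?thesis by (intro bexI[of _ "True # x"]) auto
  qed
qed auto

definition maximal_nodes :: "btree \<Rightarrow> nat set \<Rightarrow> bool list set" where
  "maximal_nodes R I =
     {x \<in> nodes R. leafset R x \<subseteq> I \<and> (\<forall>y. strict_prefix y x \<longrightarrow> \<not> leafset R y \<subseteq> I)}"

lemma maximal_nodes_antichain:
  "m \<in> maximal_nodes R I \<Longrightarrow> m' \<in> maximal_nodes R I \<Longrightarrow> prefix m m' \<Longrightarrow> m = m'"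
  unfolding maximal_nodes_def strict_prefix_def by blast

lemma maximal_node_prefix_of_overlapping:
  assumes "m \<in> maximal_nodes R I" and "x \<in> nodes R" and "leafset R x \<subseteq> I"
    and "leafset R m \<inter> leafset R x \<noteq> {}"
  shows "prefix m x"
proof -
  have "prefix m x \<or> prefix x m"
    using assms lvs_laminar unfolding maximal_nodes_def leafset_def by blast
  with assms(1,3) show ?thesis
    unfolding maximal_nodes_def strict_prefix_def by blast
qed

lemma maximal_nodes_cover:
  assumes "i \<in> I" and "I \<subseteq> leafset R []"
  shows "\<exists>m\<in>maximal_nodes R I. i \<in> leafset R m"
proof -
  define P where "P x \<longleftrightarrow> x \<in> nodes R \<and> i \<in> leafset R x \<and> leafset R x \<subseteq> I" for x
  from assms obtain x where "x \<in> nodes R" "leafset R x = {i}"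
    using lvs_singleton[of i 0 R] unfolding leafset_def by force
  with assms(1) have "P x" unfolding P_def by simp
  then obtain m where "P m" and shortest: "\<And>y. P y \<Longrightarrow> length m \<le> length y"
    using ex_has_least_nat[of P x length] by blast
  have "\<not> leafset R y \<subseteq> I" if "strict_prefix y m" for y
  proof
    assume "leafset R y \<subseteq> I"
    moreover from \<open>P m\<close> that have "y \<in> nodes R" "i \<in> leafset R y"
      using nodes_prefix_closed lvs_antimono unfolding P_def leafset_def strict_prefix_def
      by blast+
    ultimately have "length m \<le> length y" using shortest unfolding P_def by blast
    with that show False using prefix_length_less by fastforce
  qed
  with \<open>P m\<close> show ?thesis unfolding P_def maximal_nodes_def by blast
qed

lemma partitions_maximal_nodes:
  assumes "I \<subseteq> leafset R []"
  shows "partitions R I (maximal_nodes R I)"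
  unfolding partitions_def
proof (intro conjI ballI impI)
  show "maximal_nodes R I \<subseteq> nodes R" by (auto simp: maximal_nodes_def)
next
  fix m m' assume m: "m \<in> maximal_nodes R I" and m': "m' \<in> maximal_nodes R I" and "m \<noteq> m'"
  show "leafset R m \<inter> leafset R m' = {}"
  proof (rule ccontr)
    assume "leafset R m \<inter> leafset R m' \<noteq> {}"
    with m m' have "prefix m m'"
      by (intro maximal_node_prefix_of_overlapping[of m R I m']) (auto simp: maximal_nodes_def)
    with m m' \<open>m \<noteq> m'\<close> show False using maximal_nodes_antichain by blast
  qed
next
  show "(\<Union>m\<in>maximal_nodes R I. leafset R m) = I"
  proof
    show "I \<subseteq> (\<Union>m\<in>maximal_nodes R I. leafset R m)"
      using maximal_nodes_cover[OF _ assms] by blast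
  qed (auto simp: maximal_nodes_def)
qed

lemma partition_block_below_maximal_node:
  assumes "I \<subseteq> leafset R []" and "partitions R I X" and "x \<in> X"
  shows "\<exists>m\<in>maximal_nodes R I. prefix m x"
proof -
  from assms(2,3) have x: "x \<in> nodes R" "leafset R x \<subseteq> I" unfolding partitions_def by blast+
  then obtain i where i: "i \<in> leafset R x" using lvs_nonempty unfolding leafset_def by blast
  with x assms(1) obtain m where "m \<in> maximal_nodes R I" "i \<in> leafset R m"
    using maximal_nodes_cover[of i I R] by blast
  with x i have "prefix m x" by (intro maximal_node_prefix_of_overlapping[of m R I x]) auto
  with \<open>m \<in> maximal_nodes R I\<close> show ?thesis by blast
qed

lemma maximal_node_covered_by_blocks:
  assumes "partitions R I X" and "m \<in> maximal_nodes R I" and "i \<in> leafset R m"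
  shows "\<exists>x\<in>X. i \<in> leafset R x \<and> prefix m x"
proof -
  from assms(2,3) have "i \<in> I" unfolding maximal_nodes_def by blast
  with assms(1) obtain x where x: "x \<in> X" "i \<in> leafset R x" "x \<in> nodes R" "leafset R x \<subseteq> I"
    unfolding partitions_def by blast
  with assms(2,3) have "prefix m x" by (intro maximal_node_prefix_of_overlapping[of m R I x]) auto
  with x show ?thesis by blast
qed

lemma maximal_node_eq_unique_block_below:
  assumes "partitions R I X" and "m \<in> maximal_nodes R I" and "x \<in> X" and "prefix m x"
    and unique: "\<And>x'. x' \<in> X \<Longrightarrow> prefix m x' \<Longrightarrow> x' = x"
  shows "m = x"
proof (rule ccontr)
  assume "m \<noteq> x"
  with assms(4) have "strict_prefix m x" by (simp add: strict_prefix_def)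
  moreover have "x \<in> nodes R" using assms(1,3) unfolding partitions_def by blast
  ultimately have "leafset R x \<subset> leafset R m"
    using lvs_strict_antimono unfolding leafset_def by blast
  moreover have "leafset R m \<subseteq> leafset R x"
    using maximal_node_covered_by_blocks[OF assms(1,2)] unique by blast
  ultimately show False by blast
qed

lemma partition_card_ge_maximal_nodes:
  assumes "I \<subseteq> leafset R []" and "partitions R I X"
  shows "card (maximal_nodes R I) \<le> card X"
    and "card X \<le> card (maximal_nodes R I) \<Longrightarrow> X = maximal_nodes R I"
proof -
  let ?M = "maximal_nodes R I"
  obtain f where f: "\<And>x. x \<in> X \<Longrightarrow> f x \<in> ?M \<and> prefix (f x) x"
    using partition_block_below_maximal_node[OF assms] by metis
  have f_eq: "f x = m" if "x \<in> X" "m \<in> ?M" "prefix m x" for x m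
    using f[OF that(1)] that(2,3) prefix_same_cases maximal_nodes_antichain by metis
  have "finite X"
    using assms(2) finite_nodes[of R] finite_subset unfolding partitions_def by blast
  have covered: "\<exists>x\<in>X. f x = m \<and> i \<in> leafset R x" if "m \<in> ?M" "i \<in> leafset R m" for m i
    using maximal_node_covered_by_blocks[OF assms(2) that] f_eq that(1) by blast
  have has_leaf: "\<exists>i. i \<in> leafset R m" if "m \<in> ?M" for m
    using that lvs_nonempty unfolding maximal_nodes_def leafset_def by blast
  have "f ` X = ?M"
    using f covered has_leaf by blast
  then show card_le: "card ?M \<le> card X"
    using card_image_le[OF \<open>finite X\<close>, of f] by simp
  assume "card X \<le> card ?M"
  with \<open>f ` X = ?M\<close> card_le have "inj_on f X"
    by (intro eq_card_imp_inj_on[OF \<open>finite X\<close>]) simp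
  have "?M \<subseteq> X"
  proof
    fix m assume "m \<in> ?M"
    with \<open>f ` X = ?M\<close> obtain x where x: "x \<in> X" "f x = m" by force
    have "m = x"
    proof (rule maximal_node_eq_unique_block_below[OF assms(2) \<open>m \<in> ?M\<close> x(1)])
      show "prefix m x" using f[OF x(1)] x(2) by simp
      show "x' = x" if "x' \<in> X" "prefix m x'" for x'
        using \<open>inj_on f X\<close> f_eq[OF that(1) \<open>m \<in> ?M\<close> that(2)] x that(1)
        unfolding inj_on_def by metis
    qed
    with x show "m \<in> X" by simp
  qed
  with \<open>finite X\<close> \<open>card X \<le> card ?M\<close> show "X = ?M"
    using card_subset_eq card_le by (metis le_antisym)
qed

lemma XI_eq_maximal_nodes:
  assumes "I \<subseteq> leafset R []"
  shows "XI R I = maximal_nodes R I"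
  unfolding XI_def
proof (rule the_equality)
  show "partitions R I (maximal_nodes R I) \<and>
      (\<forall>Y. partitions R I Y \<longrightarrow> card (maximal_nodes R I) \<le> card Y)"
    using partitions_maximal_nodes[OF assms] partition_card_ge_maximal_nodes(1)[OF assms] by blast
next
  fix X assume "partitions R I X \<and> (\<forall>Y. partitions R I Y \<longrightarrow> card X \<le> card Y)"
  then show "X = maximal_nodes R I"
    using partition_card_ge_maximal_nodes(2)[OF assms] partitions_maximal_nodes[OF assms] by blast
qed

theorem lemma4p4:
  fixes R T :: btree and n :: nat and p s a b :: "bool list"
  assumes "n \<ge> 2"
    and "complete R" and "nleaves R = n"
    and "nleaves T = n"
    and "p \<in> nodes T" and "s \<in> nodes T" and "p \<noteq> s"
    and "a \<in> nodes R" and "b \<in> nodes R"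
    and "a \<in> XI R (leafset T p)" and "b \<in> XI R (leafset T s)"
  shows "(prefix a b \<longrightarrow> prefix p s \<or> prefix s p) \<and>
         (strict_prefix a b \<longrightarrow> strict_prefix p s)"
proof -
  have "XI R (leafset T x) = maximal_nodes R (leafset T x)" if "x \<in> nodes T" for x
    using XI_eq_maximal_nodes lvs_subset_range[OF that, of 0] assms(3,4)
    unfolding leafset_def by simp
  with assms(5,6,10,11) have a: "a \<in> maximal_nodes R (leafset T p)"
    and b: "b \<in> maximal_nodes R (leafset T s)" by simp_all
  have comparable: "prefix p s \<or> prefix s p" if "prefix a b"
  proof -
    obtain i where "i \<in> leafset R b" using lvs_nonempty[OF assms(9)] unfolding leafset_def by blast
    moreover have "leafset R b \<subseteq> leafset R a"
      using lvs_antimono[OF assms(9) that] unfolding leafset_def .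
    ultimately have "i \<in> leafset T p \<inter> leafset T s"
      using a b unfolding maximal_nodes_def by blast
    then show ?thesis using lvs_laminar[OF assms(5,6)] unfolding leafset_def by blast
  qed
  moreover have "strict_prefix p s" if "strict_prefix a b"
  proof (rule ccontr)
    assume "\<not> strict_prefix p s"
    with comparable that assms(7) have "prefix s p" by (auto simp: strict_prefix_def)
    then have "leafset T p \<subseteq> leafset T s"
      using lvs_antimono[OF assms(5)] unfolding leafset_def by blast
    with a have "leafset R a \<subseteq> leafset T s" unfolding maximal_nodes_def by blast
    with b that show False unfolding maximal_nodes_def by blast
  qed
  ultimately show ?thesis by (auto simp: strict_prefix_def)
qed

end
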